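(* Let $R$ be a cubiculated region. The tiling space $\mathcal{T}_R$ is flip connected if and only if $I_{R_{tiling}}\subseteq I_{R_{flip}}$.
   Context: A cubiculated region $R$ is a homogeneous cubical complex of dimension $n$ embedded in $\mathbb{R}^N$ ($n\le N$), a union of elementary $n$-cubes. A domino is two elementary $n$-cubes of $R$ sharing an $(n-1)$-face; $\mathcal{D}_R$ is the set of dominoes. A domino tiling $T\subseteq\mathcal{D}_R$ covers every elementary cube exactly once; $\mathcal{T}_R$ is the set of tilings. $G_R$ is the graph with a vertex per elementary cube and an edge between cubes sharing an $(n-1)$-face; dominoes are edges of $G_R$. A move $M=(D_1,D_2)$ (with $D_1,D_2\subseteq\mathcal{D}_R$) takes a tiling $T_1$ to $T_1+M=(T_1\setminus D_1)\cup D_2$. A local flip is a move that replaces two adjacent parallel dominoes (sharing two $(n-1)$-faces) by the two adjacent parallel dominoes covering the same four cubes in the perpendicular direction; equivalently $D_1\cup D_2$ is a $4$-cycle of $G_R$ with $D_1,D_2$ its two pairs of opposite edges. $\mathcal{M}_{flip}$ is the set of all local flips. $\mathcal{T}_R$ is flip connected if for all $T_1,T_2\in\mathcal{T}_R$ there are $M_1,\dots,M_r\in\mathcal{M}_{flip}$ with $T_2=T_1+M_1+\dots+M_r$ and $T_1+M_1+\dots+M_s\in\mathcal{T}_R$ for all $1\le s\le r$. In the polynomial ring $\mathbb{K}[y_e: e\in E(G_R)]$ write $y^{E_0}=\prod_{e\in E_0}y_e$ for $E_0\subseteq E(G_R)$. The flip ideal is $I_{R_{flip}}=\langle y^{D_1}-y^{D_2}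 : (D_1,D_2)\in\mathcal{M}_{flip}\rangle$ and the tiling ideal is $I_{R_{tiling}}=\langle y^{T_1}-y^{T_2} : T_1,T_2\in\mathcal{T}_R\rangle$. *)

theory Defs
  imports Complex_Main "HOL-Library.Poly_Mapping"
begin

text \<open>An elementary cube in R^N, where N = CARD('n): a corner a in Z^N and the set S of
  non-degenerate coordinate directions. Its dimension is card S.\<close>
type_synonym 'n cube = "('n \<Rightarrow> int) \<times> 'n set"

definition cube_set :: "'n cube \<Rightarrow> ('n \<Rightarrow> real) set" where
  "cube_set c = {x. \<forall>i. if i \<in> snd c then real_of_int (fst c i) \<le> x i \<and> x i \<le> real_of_int (fst c i) + 1
                              else x i = real_of_int (fst c i)}"

definition elem_cube :: "nat \<Rightarrow> 'n cube \<Rightarrow> bool" where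
  "elem_cube k c \<longleftrightarrow> card (snd c) = k"

definition cubiculated_region :: "nat \<Rightarrow> ('n::finite) cube set \<Rightarrow> bool" where
  "cubiculated_region n R \<longleftrightarrow> finite R \<and> (\<forall>c\<in>R. elem_cube n c)"

definition region_set :: "'n cube set \<Rightarrow> ('n \<Rightarrow> real) set" where
  "region_set R = (\<Union>c\<in>R. cube_set c)"

definition share_face :: "nat \<Rightarrow> 'n cube \<Rightarrow> 'n cube \<Rightarrow> bool" where
  "share_face n c1 c2 \<longleftrightarrow> c1 \<noteq> c2 \<and>
     (\<exists>f. elem_cube (n - 1) f \<and> cube_set c1 \<inter> cube_set c2 = cube_set f)"

text \<open>Edges of G_R = dominoes of R (unordered pairs of cubes).\<close>
definition dominoes :: "nat \<Rightarrow> 'n cube set \<Rightarrow> 'n cube set set" where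
  "dominoes n R = {{c1, c2} | c1 c2. c1 \<in> R \<and> c2 \<in> R \<and> share_face n c1 c2}"

definition tilings :: "nat \<Rightarrow> 'n cube set \<Rightarrow> 'n cube set set set" where
  "tilings n R = {T. T \<subseteq> dominoes n R \<and> (\<forall>c\<in>R. \<exists>!d. d \<in> T \<and> c \<in> d)}"

type_synonym 'n move = "'n cube set set \<times> 'n cube set set"

definition apply_move :: "'n cube set set \<Rightarrow> 'n move \<Rightarrow> 'n cube set set" where
  "apply_move T M = (T - fst M) \<union> snd M"

definition apply_moves :: "'n cube set set \<Rightarrow> 'n move list \<Rightarrow> 'n cube set set" where
  "apply_moves T Ms = foldl apply_move T Ms"

text \<open>Local flips: D1 \<union> D2 is a 4-cycle a-b-c-d-a of G_R, D1 and D2 its pairs of opposite edges.\<close>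
definition flips :: "nat \<Rightarrow> 'n cube set \<Rightarrow> 'n move set" where
  "flips n R = {({{a, b}, {c, d}}, {{b, c}, {d, a}}) | a b c d.
      a \<in> R \<and> b \<in> R \<and> c \<in> R \<and> d \<in> R \<and> distinct [a, b, c, d] \<and>
      {a, b} \<in> dominoes n R \<and> {b, c} \<in> dominoes n R \<and>
      {c, d} \<in> dominoes n R \<and> {d, a} \<in> dominoes n R}"

definition flip_connected :: "nat \<Rightarrow> 'n cube set \<Rightarrow> bool" where
  "flip_connected n R \<longleftrightarrow>
     (\<forall>T1 \<in> tilings n R. \<forall>T2 \<in> tilings n R. \<exists>Ms.
        set Ms \<subseteq> flips n R \<and> apply_moves T1 Ms = T2 \<and>
        (\<forall>s. 1 \<le> s \<and> s \<le> length Ms \<longrightarrow> apply_moves T1 (take s Ms) \<in> tilings n R))"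

text \<open>Polynomials over 'k in variables indexed by (sets of cubes); the ring K[y_e : e \<in> E(G_R)]
  is the subring of polynomials only involving variables y_e with e a domino.\<close>
type_synonym ('n, 'k) dpoly = "('n cube set \<Rightarrow>\<^sub>0 nat) \<Rightarrow>\<^sub>0 'k"

definition poly_ring :: "nat \<Rightarrow> 'n cube set \<Rightarrow> ('n, 'k::field) dpoly set" where
  "poly_ring n R = {p. \<forall>m \<in> Poly_Mapping.keys p. Poly_Mapping.keys m \<subseteq> dominoes n R}"

text \<open>y^{E0} = product of the variables y_e, e \<in> E0.\<close>
definition ymon :: "'n cube set set \<Rightarrow> ('n, 'k::field) dpoly" where
  "ymon E0 = Poly_Mapping.single (\<Sum>e\<in>E0. Poly_Mapping.single e 1) 1"

definition gen_ideal :: "('a::comm_ring_1) set \<Rightarrow> 'a set \<Rightarrow> 'a set" where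
  "gen_ideal P G = {p. \<exists>F r. finite F \<and> F \<subseteq> G \<and> (\<forall>g\<in>F. r g \<in> P) \<and> p = (\<Sum>g\<in>F. r g * g)}"

definition flip_ideal :: "nat \<Rightarrow> 'n cube set \<Rightarrow> ('n, 'k::field) dpoly set" where
  "flip_ideal n R = gen_ideal (poly_ring n R)
      {ymon (fst M) - ymon (snd M) | M. M \<in> flips n R}"

definition tiling_ideal :: "nat \<Rightarrow> 'n cube set \<Rightarrow> ('n, 'k::field) dpoly set" where
  "tiling_ideal n R = gen_ideal (poly_ring n R)
      {ymon T1 - ymon T2 | T1 T2. T1 \<in> tilings n R \<and> T2 \<in> tilings n R}"

end

theory Submission
  imports Defs
begin

(*
  Along a flip walk, consecutive tilings T and T' = (T - D1) \<union> D2 satisfy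
  y^T - y^T' = y^(T - D1) (y^D1 - y^D2), so flip connectivity puts every generator of the
  tiling ideal into the flip ideal.

  Conversely, let C be the set of exponent vectors of the tilings reachable from T1 by flips.
  An exponent u + D1 is the exponent of a tiling S only if D1 \<subseteq> S, and then flipping S
  yields the exponent u + D2; hence C is closed under u + D1 \<leftrightarrow> u + D2 for every flip (D1, D2).
  So the linear functional summing the coefficients of the monomials with exponent in C
  vanishes on the flip ideal. On y^T1 - y^T2 it takes the value 1 - [T2 \<in> C]; hence if this
  binomial lies in the flip ideal, T2 is reachable from T1.
*)

locale semiring_closed =
  fixes P :: "'a::comm_ring_1 set"
  assumes zero_closed: "0 \<in> P"
    and add_closed: "x \<in> P \<Longrightarrow> y \<in> P \<Longrightarrow> x + y \<in> P"
    and mult_closed: "x \<in> P \<Longrightarrow> y \<in> P \<Longrightarrow> x * y \<in> P"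

lemma zero_in_gen_ideal: "0 \<in> gen_ideal P G"
  unfolding gen_ideal_def by (intro CollectI exI[of _ "{}"]) auto

lemma mult_gen_in_gen_ideal: "g \<in> G \<Longrightarrow> r \<in> P \<Longrightarrow> r * g \<in> gen_ideal P G"
  unfolding gen_ideal_def by (intro CollectI exI[of _ "{g}"] exI[of _ "\<lambda>_. r"]) auto

context semiring_closed
begin

lemma add_in_gen_ideal:
  assumes "p \<in> gen_ideal P G" and "q \<in> gen_ideal P G"
  shows "p + q \<in> gen_ideal P G"
proof -
  obtain F1 r1 where F1: "finite F1" "F1 \<subseteq> G" "\<forall>g\<in>F1. r1 g \<in> P" "p = (\<Sum>g\<in>F1. r1 g * g)"
    using assms(1) unfolding gen_ideal_def by blast
  obtain F2 r2 where F2: "finite F2" "F2 \<subseteq> G" "\<forall>g\<in>F2. r2 g \<in> P" "q = (\<Sum>g\<in>F2. r2 g * g)"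
    using assms(2) unfolding gen_ideal_def by blast
  define r1' where "r1' g = (if g \<in> F1 then r1 g else 0)" for g
  define r2' where "r2' g = (if g \<in> F2 then r2 g else 0)" for g
  have "p = (\<Sum>g\<in>F1 \<union> F2. r1' g * g)"
    unfolding F1(4) r1'_def by (rule sum.mono_neutral_cong_left) (use F1 F2 in auto)
  moreover have "q = (\<Sum>g\<in>F1 \<union> F2. r2' g * g)"
    unfolding F2(4) r2'_def by (rule sum.mono_neutral_cong_left) (use F1 F2 in auto)
  ultimately have "p + q = (\<Sum>g\<in>F1 \<union> F2. (r1' g + r2' g) * g)"
    by (simp add: sum.distrib distrib_right)
  moreover have "\<forall>g\<in>F1 \<union> F2. r1' g + r2' g \<in> P"
    using F1(3) F2(3) by (auto simp: r1'_def r2'_def intro: add_closed zero_closed)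
  ultimately show ?thesis
    unfolding gen_ideal_def using F1 F2
    by (intro CollectI exI[of _ "F1 \<union> F2"] exI[of _ "\<lambda>g. r1' g + r2' g"]) auto
qed

lemma mult_in_gen_ideal:
  assumes "x \<in> P" and "q \<in> gen_ideal P G"
  shows "x * q \<in> gen_ideal P G"
proof -
  obtain F r where F: "finite F" "F \<subseteq> G" "\<forall>g\<in>F. r g \<in> P" "q = (\<Sum>g\<in>F. r g * g)"
    using assms(2) unfolding gen_ideal_def by blast
  have "x * q = (\<Sum>g\<in>F. (x * r g) * g)"
    unfolding F(4) sum_distrib_left by (simp add: mult.assoc)
  with F assms(1) show ?thesis
    unfolding gen_ideal_def
    by (intro CollectI exI[of _ F] exI[of _ "\<lambda>g. x * r g"]) (auto intro: mult_closed)
qed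

lemma sum_in_gen_ideal:
  "finite F \<Longrightarrow> (\<And>x. x \<in> F \<Longrightarrow> f x \<in> gen_ideal P G) \<Longrightarrow> sum f F \<in> gen_ideal P G"
  by (induction F rule: finite_induct) (auto intro: zero_in_gen_ideal add_in_gen_ideal)

lemma gen_ideal_subset:
  assumes "G \<subseteq> gen_ideal P H"
  shows "gen_ideal P G \<subseteq> gen_ideal P H"
proof
  fix p assume "p \<in> gen_ideal P G"
  then obtain F r where F: "finite F" "F \<subseteq> G" "\<forall>g\<in>F. r g \<in> P" "p = (\<Sum>g\<in>F. r g * g)"
    unfolding gen_ideal_def by blast
  show "p \<in> gen_ideal P H"
    unfolding F(4) using F assms by (intro sum_in_gen_ideal mult_in_gen_ideal) auto
qed

end

interpretation poly_ring: semiring_closed "poly_ring n R :: ('n, 'k::field) dpoly set" for n R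
proof unfold_locales
  fix x y :: "('n, 'k) dpoly"
  assume x: "x \<in> poly_ring n R" and y: "y \<in> poly_ring n R"
  show "x + y \<in> poly_ring n R"
    using x y keys_add[of x y] unfolding poly_ring_def by blast
  show "x * y \<in> poly_ring n R"
    unfolding poly_ring_def mem_Collect_eq
  proof
    fix m assume "m \<in> Poly_Mapping.keys (x * y)"
    then obtain a b where "m = a + b" "a \<in> Poly_Mapping.keys x" "b \<in> Poly_Mapping.keys y"
      using keys_mult[of x y] by blast
    then show "Poly_Mapping.keys m \<subseteq> dominoes n R"
      using x y keys_add[of a b] unfolding poly_ring_def by blast
  qed
qed (simp add: poly_ring_def)

definition char_pm :: "'a set \<Rightarrow> 'a \<Rightarrow>\<^sub>0 nat" where
  "char_pm E = (\<Sum>e\<in>E. Poly_Mapping.single e 1)"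

lemma ymon_eq_single: "ymon E = Poly_Mapping.single (char_pm E) 1"
  by (simp add: ymon_def char_pm_def)

lemma lookup_char_pm: "finite E \<Longrightarrow> Poly_Mapping.lookup (char_pm E) e = (if e \<in> E then 1 else 0)"
  by (simp add: char_pm_def lookup_sum lookup_single when_def)

lemma keys_char_pm: "finite E \<Longrightarrow> Poly_Mapping.keys (char_pm E) = E"
  by (simp add: in_keys_iff lookup_char_pm set_eq_iff)

lemma char_pm_inject: "finite X \<Longrightarrow> finite Y \<Longrightarrow> char_pm X = char_pm Y \<longleftrightarrow> X = Y"
  by (metis keys_char_pm)

lemma char_pm_union:
  "finite X \<Longrightarrow> finite Y \<Longrightarrow> X \<inter> Y = {} \<Longrightarrow> char_pm (X \<union> Y) = char_pm X + char_pm Y"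
  by (simp add: char_pm_def sum.union_disjoint)

lemma char_pm_eq_add_iff:
  assumes "finite S" and "finite A"
  shows "char_pm S = u + char_pm A \<longleftrightarrow> A \<subseteq> S \<and> u = char_pm (S - A)"
proof
  assume eq: "char_pm S = u + char_pm A"
  have lookup_u: "Poly_Mapping.lookup u e + (if e \<in> A then 1 else 0) = (if e \<in> S then 1 else 0)"
    for e using arg_cong[OF eq, of "\<lambda>p. Poly_Mapping.lookup p e"] assms
    by (simp add: lookup_add lookup_char_pm)
  have "A \<subseteq> S"
  proof
    fix e assume "e \<in> A"
    then show "e \<in> S" using lookup_u[of e] by (auto split: if_splits)
  qed
  moreover have "u = char_pm (S - A)"
  proof (rule poly_mapping_eqI)
    fix e
    show "Poly_Mapping.lookup u e = Poly_Mapping.lookup (char_pm (S - A)) e"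
      using lookup_u[of e] assms by (auto simp: lookup_char_pm split: if_splits)
  qed
  ultimately show "A \<subseteq> S \<and> u = char_pm (S - A)" ..
next
  assume sub: "A \<subseteq> S \<and> u = char_pm (S - A)"
  have "char_pm ((S - A) \<union> A) = char_pm (S - A) + char_pm A"
    by (rule char_pm_union) (use assms in auto)
  moreover have "(S - A) \<union> A = S"
    using sub by blast
  ultimately show "char_pm S = u + char_pm A"
    using sub by simp
qed

lemma ymon_union:
  "finite X \<Longrightarrow> finite Y \<Longrightarrow> X \<inter> Y = {} \<Longrightarrow>
     (ymon (X \<union> Y) :: ('n, 'k::field) dpoly) = ymon X * ymon Y"
  by (simp add: ymon_eq_single char_pm_union mult_single)

lemma ymon_in_poly_ring: "finite E \<Longrightarrow> E \<subseteq> dominoes n R \<Longrightarrow> ymon E \<in> poly_ring n R"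
  by (simp add: poly_ring_def ymon_eq_single keys_char_pm)

subsection \<open>Summing the coefficients over a set of exponents\<close>

definition coeff_sum :: "'a set \<Rightarrow> ('a \<Rightarrow>\<^sub>0 'b::comm_monoid_add) \<Rightarrow> 'b" where
  "coeff_sum C p = (\<Sum>m \<in> Poly_Mapping.keys p \<inter> C. Poly_Mapping.lookup p m)"

lemma coeff_sum_eq_sum_superset:
  "finite S \<Longrightarrow> Poly_Mapping.keys p \<subseteq> S \<Longrightarrow>
     coeff_sum C p = (\<Sum>m \<in> S \<inter> C. Poly_Mapping.lookup p m)"
  unfolding coeff_sum_def by (rule sum.mono_neutral_left) (auto simp: in_keys_iff)

lemma coeff_sum_add: "coeff_sum C (p + q) = coeff_sum C p + coeff_sum C q"
proof -
  let ?S = "Poly_Mapping.keys p \<union> Poly_Mapping.keys q"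
  have "coeff_sum C (p + q) = (\<Sum>m \<in> ?S \<inter> C. Poly_Mapping.lookup (p + q) m)"
    by (rule coeff_sum_eq_sum_superset) (simp_all add: keys_add)
  also have "\<dots> = coeff_sum C p + coeff_sum C q"
    by (simp add: lookup_add sum.distrib coeff_sum_eq_sum_superset[of ?S])
  finally show ?thesis .
qed

lemma coeff_sum_zero: "coeff_sum C 0 = 0"
  by (simp add: coeff_sum_def)

lemma coeff_sum_diff: "coeff_sum C (p - q) = coeff_sum C p - coeff_sum C (q :: 'a \<Rightarrow>\<^sub>0 'b::ab_group_add)"
  by (metis add_diff_cancel diff_add_cancel coeff_sum_add)

lemma coeff_sum_single: "coeff_sum C (Poly_Mapping.single m c) = (if m \<in> C then c else 0)"
  by (auto simp: coeff_sum_def)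

lemma coeff_sum_sum: "finite F \<Longrightarrow> coeff_sum C (sum f F) = (\<Sum>x\<in>F. coeff_sum C (f x))"
  by (induction F rule: finite_induct) (simp_all add: coeff_sum_zero coeff_sum_add)

lemma coeff_sum_mult_binomial:
  assumes "\<And>u. u + a \<in> C \<longleftrightarrow> u + b \<in> C"
  shows "coeff_sum C (r * (Poly_Mapping.single a 1 - Poly_Mapping.single b (1::'b::ring_1))) = 0"
proof (induction r rule: update_induct)
  case const
  then show ?case by (simp add: coeff_sum_zero)
next
  case (update f x c)
  then have "Poly_Mapping.update x c f = f + Poly_Mapping.single x c"
    by (intro poly_mapping_eqI) (auto simp: lookup_update lookup_add lookup_single in_keys_iff when_def)
  with update.IH show ?case
    by (simp add: distrib_right right_diff_distrib mult_single coeff_sum_add coeff_sum_diff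
        coeff_sum_single assms)
qed

lemma coeff_sum_gen_ideal:
  assumes "\<And>g r. g \<in> G \<Longrightarrow> coeff_sum C (r * g) = 0" and "p \<in> gen_ideal P G"
  shows "coeff_sum C p = 0"
proof -
  obtain F r where F: "finite F" "F \<subseteq> G" "p = (\<Sum>g\<in>F. r g * g)"
    using assms(2) unfolding gen_ideal_def by blast
  have "coeff_sum C (r g * g) = 0" if "g \<in> F" for g
    using that F(2) assms(1) by blast
  then show ?thesis
    by (simp add: F coeff_sum_sum)
qed

lemma dominoes_subset: "d \<in> dominoes n R \<Longrightarrow> d \<subseteq> R"
  unfolding dominoes_def by auto

lemma domino_nonempty: "d \<in> dominoes n R \<Longrightarrow> d \<noteq> {}"
  unfolding dominoes_def by auto

lemma finite_dominoes: "finite R \<Longrightarrow> finite (dominoes n R)"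
  by (rule finite_subset[of _ "Pow R"]) (auto dest: dominoes_subset)

lemma tiling_subset_dominoes: "T \<in> tilings n R \<Longrightarrow> T \<subseteq> dominoes n R"
  unfolding tilings_def by auto

lemma finite_tiling: "finite R \<Longrightarrow> T \<in> tilings n R \<Longrightarrow> finite T"
  by (meson finite_dominoes tiling_subset_dominoes finite_subset)

lemma tiling_unique:
  "T \<in> tilings n R \<Longrightarrow> d \<in> T \<Longrightarrow> d' \<in> T \<Longrightarrow> c \<in> d \<Longrightarrow> c \<in> d' \<Longrightarrow> d = d'"
  unfolding tilings_def using dominoes_subset by blast

lemma tiling_covers: "T \<in> tilings n R \<Longrightarrow> c \<in> R \<Longrightarrow> \<exists>d\<in>T. c \<in> d"
  unfolding tilings_def by blast

lemma tilingsI: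
  assumes "T \<subseteq> dominoes n R" and "\<And>c. c \<in> R \<Longrightarrow> \<exists>d\<in>T. c \<in> d"
    and "\<And>c d d'. d \<in> T \<Longrightarrow> d' \<in> T \<Longrightarrow> c \<in> d \<Longrightarrow> c \<in> d' \<Longrightarrow> d = d'"
  shows "T \<in> tilings n R"
  using assms unfolding tilings_def by blast

lemma tiling_exchange:
  assumes T: "T \<in> tilings n R" and "A \<subseteq> T" and B: "B \<subseteq> dominoes n R"
    and same_cubes: "\<Union>B = \<Union>A" and "pairwise disjnt B"
  shows "(T - A) \<union> B \<in> tilings n R" and "(T - A) \<inter> B = {}"
proof -
  have in_A: "d \<in> A" if d: "d \<in> T" "c \<in> d" and c: "c \<in> \<Union>B" for d c
  proof -
    obtain a where "a \<in> A" "c \<in> a"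
      using c same_cubes by auto
    with tiling_unique[OF T d(1) _ d(2), of a] \<open>A \<subseteq> T\<close> show "d \<in> A"
      by auto
  qed
  show disj: "(T - A) \<inter> B = {}"
  proof (rule ccontr)
    assume "(T - A) \<inter> B \<noteq> {}"
    then obtain d c where "d \<in> T - A" "d \<in> B" "c \<in> d"
      using B domino_nonempty by blast
    then show False
      using in_A[of d c] by auto
  qed
  show "(T - A) \<union> B \<in> tilings n R"
  proof (rule tilingsI)
    show "(T - A) \<union> B \<subseteq> dominoes n R"
      using tiling_subset_dominoes[OF T] B by blast
  next
    fix c assume "c \<in> R"
    then obtain d where "d \<in> T" "c \<in> d"
      using tiling_covers[OF T] by blast
    then show "\<exists>d\<in>(T - A) \<union> B. c \<in> d"
      using same_cubes by (cases "d \<in> A") auto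
  next
    fix c d d' assume d: "d \<in> (T - A) \<union> B" "c \<in> d" and d': "d' \<in> (T - A) \<union> B" "c \<in> d'"
    show "d = d'"
    proof (cases "d \<in> B"; cases "d' \<in> B")
      assume "d \<in> B" "d' \<in> B"
      then show ?thesis
        using d(2) d'(2) \<open>pairwise disjnt B\<close> unfolding pairwise_def disjnt_def by blast
    next
      assume "d \<notin> B" "d' \<notin> B"
      then show ?thesis
        using d d' tiling_unique[OF T] by blast
    next
      assume "d \<in> B" "d' \<notin> B"
      then show ?thesis
        using d d' in_A[of d' c] by auto
    next
      assume "d \<notin> B" "d' \<in> B"
      then show ?thesis
        using d d' in_A[of d c] by auto
    qed
  qed
qed

definition domino_square ::
    "nat \<Rightarrow> 'n cube set \<Rightarrow> 'n cube \<Rightarrow> 'n cube \<Rightarrow> 'n cube \<Rightarrow> 'n cube \<Rightarrow> bool" where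
  "domino_square n R a b c d \<longleftrightarrow> distinct [a, b, c, d] \<and>
     {a, b} \<in> dominoes n R \<and> {b, c} \<in> dominoes n R \<and> {c, d} \<in> dominoes n R \<and> {d, a} \<in> dominoes n R"

lemma flipsE:
  assumes "M \<in> flips n R"
  obtains a b c d where "domino_square n R a b c d" and "M = ({{a, b}, {c, d}}, {{b, c}, {d, a}})"
  using assms unfolding flips_def domino_square_def by blast

lemma flipsI: "domino_square n R a b c d \<Longrightarrow> ({{a, b}, {c, d}}, {{b, c}, {d, a}}) \<in> flips n R"
  unfolding flips_def domino_square_def using dominoes_subset by blast

lemma domino_square_rotate: "domino_square n R a b c d \<Longrightarrow> domino_square n R b c d a"
  unfolding domino_square_def by (auto simp: insert_commute)

lemma flips_swap:
  assumes "(A, B) \<in> flips n R"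
  shows "(B, A) \<in> flips n R"
proof -
  obtain a b c d where sq: "domino_square n R a b c d" "A = {{a, b}, {c, d}}" "B = {{b, c}, {d, a}}"
    using assms by (elim flipsE) simp
  have "({{b, c}, {d, a}}, {{c, d}, {a, b}}) \<in> flips n R"
    using flipsI[OF domino_square_rotate[OF sq(1)]] .
  then show ?thesis
    using sq by (simp add: insert_commute)
qed

lemma flips_subset_dominoes: "(A, B) \<in> flips n R \<Longrightarrow> A \<subseteq> dominoes n R \<and> B \<subseteq> dominoes n R"
  by (elim flipsE) (auto simp: domino_square_def)

lemma flip_applies:
  assumes "T \<in> tilings n R" and "(A, B) \<in> flips n R" and "A \<subseteq> T"
  shows "(T - A) \<union> B \<in> tilings n R" and "(T - A) \<inter> B = {}"
proof -
  obtain a b c d where "domino_square n R a b c d" "A = {{a, b}, {c, d}}" "B = {{b, c}, {d, a}}"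
    using assms(2) by (elim flipsE) simp
  then have "B \<subseteq> dominoes n R" "\<Union>B = \<Union>A" "pairwise disjnt B"
    by (auto simp: domino_square_def pairwise_def disjnt_def)
  then show "(T - A) \<union> B \<in> tilings n R" and "(T - A) \<inter> B = {}"
    using tiling_exchange[OF assms(1,3)] by auto
qed

lemma flip_fixes_tiling:
  assumes T: "T \<in> tilings n R" and sq: "domino_square n R a b c d"
    and T': "(T - {{a, b}, {c, d}}) \<union> {{b, c}, {d, a}} \<in> tilings n R" and ab: "{a, b} \<notin> T"
  shows "(T - {{a, b}, {c, d}}) \<union> {{b, c}, {d, a}} = T"
proof -
  have dist: "distinct [a, b, c, d]" and "a \<in> R" "b \<in> R"
    using sq dominoes_subset by (auto simp: domino_square_def)
  have in_T: "e \<in> T" if "e \<in> {{b, c}, {d, a}}" "x \<in> e" "x \<in> {a, b}" for e x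
  proof -
    obtain e' where "e' \<in> T" "x \<in> e'"
      using tiling_covers[OF T] \<open>a \<in> R\<close> \<open>b \<in> R\<close> \<open>x \<in> {a, b}\<close> by blast
    moreover have "e' \<notin> {{a, b}, {c, d}}"
      using ab dist \<open>e' \<in> T\<close> \<open>x \<in> e'\<close> \<open>x \<in> {a, b}\<close> by auto
    ultimately show "e \<in> T"
      using tiling_unique[OF T', of e' e x] that by auto
  qed
  have "{d, a} \<in> T" "{b, c} \<in> T"
    using in_T[of "{d, a}" a] in_T[of "{b, c}" b] by auto
  moreover have "{c, d} \<notin> T"
    using tiling_unique[OF T _ \<open>{d, a} \<in> T\<close>, of "{c, d}" d] dist by (auto simp: doubleton_eq_iff)
  ultimately show ?thesis
    using ab by auto
qed

text \<open>A move (D1, D2) may be applied to a tiling T even if D1 is not contained in T; if the result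
  is again a tiling, such a move is the identity.\<close>

lemma flip_tiling_cases:
  assumes T: "T \<in> tilings n R" and "(A, B) \<in> flips n R" and T': "(T - A) \<union> B \<in> tilings n R"
  shows "A \<subseteq> T \<or> (T - A) \<union> B = T"
proof -
  obtain a b c d where sq: "domino_square n R a b c d" and A: "A = {{a, b}, {c, d}}"
    and B: "B = {{b, c}, {d, a}}"
    using assms(2) by (elim flipsE) simp
  have "(T - A) \<union> B = T" if "{a, b} \<notin> T"
    using flip_fixes_tiling[OF T sq _ that] T' A B by simp
  moreover have "(T - A) \<union> B = T" if "{c, d} \<notin> T"
  proof -
    have "A = {{c, d}, {a, b}}" "B = {{d, a}, {b, c}}"
      using A B by (auto simp: insert_commute)
    then show ?thesis
      using flip_fixes_tiling[OF T domino_square_rotate[OF domino_square_rotate[OF sq]] _ that] T'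
      by simp
  qed
  ultimately show ?thesis
    using A by blast
qed

fun flip_walk :: "nat \<Rightarrow> 'n cube set \<Rightarrow> 'n cube set set \<Rightarrow> 'n move list \<Rightarrow> bool" where
  "flip_walk n R T [] = True"
| "flip_walk n R T (M # Ms) \<longleftrightarrow>
     M \<in> flips n R \<and> apply_move T M \<in> tilings n R \<and> flip_walk n R (apply_move T M) Ms"

definition flip_reachable ::
    "nat \<Rightarrow> 'n cube set \<Rightarrow> 'n cube set set \<Rightarrow> 'n cube set set \<Rightarrow> bool" where
  "flip_reachable n R T S \<longleftrightarrow> (\<exists>Ms. flip_walk n R T Ms \<and> apply_moves T Ms = S)"

lemma apply_moves_Nil [simp]: "apply_moves T [] = T"
  by (simp add: apply_moves_def)

lemma apply_moves_Cons: "apply_moves T (M # Ms) = apply_moves (apply_move T M) Ms"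
  by (simp add: apply_moves_def)

lemma apply_moves_snoc: "apply_moves T (Ms @ [M]) = apply_move (apply_moves T Ms) M"
  by (simp add: apply_moves_def)

lemma all_between_one_Suc_iff:
  "(\<forall>s. 1 \<le> s \<and> s \<le> Suc k \<longrightarrow> Q s) \<longleftrightarrow>
     Q (1::nat) \<and> (\<forall>s. 1 \<le> s \<and> s \<le> k \<longrightarrow> Q (Suc s))"
  (is "?L \<longleftrightarrow> ?R")
proof
  assume ?R
  show ?L
  proof (intro allI impI)
    fix s assume "1 \<le> s \<and> s \<le> Suc k"
    then obtain s' where "s = Suc s'" "s' \<le> k" by (cases s) auto
    with \<open>?R\<close> show "Q s" by (cases s') auto
  qed
qed auto

lemma flip_walk_iff:
  "flip_walk n R T Ms \<longleftrightarrow> set Ms \<subseteq> flips n R \<and>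
     (\<forall>s. 1 \<le> s \<and> s \<le> length Ms \<longrightarrow> apply_moves T (take s Ms) \<in> tilings n R)"
proof (induction Ms arbitrary: T)
  case (Cons M Ms)
  have "(\<forall>s. 1 \<le> s \<and> s \<le> length (M # Ms) \<longrightarrow>
        apply_moves T (take s (M # Ms)) \<in> tilings n R) \<longleftrightarrow>
      apply_move T M \<in> tilings n R \<and>
      (\<forall>s. 1 \<le> s \<and> s \<le> length Ms \<longrightarrow> apply_moves (apply_move T M) (take s Ms) \<in> tilings n R)"
    unfolding length_Cons all_between_one_Suc_iff by (simp add: apply_moves_Cons)
  with Cons.IH show ?case
    by auto
qed simp

lemma flip_connected_iff_reachable:
  "flip_connected n R \<longleftrightarrow> (\<forall>T1\<in>tilings n R. \<forall>T2\<in>tilings n R. flip_reachable n R T1 T2)"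
  unfolding flip_connected_def flip_reachable_def flip_walk_iff by (simp add: conj_ac)

lemma flip_walk_snoc:
  "flip_walk n R T (Ms @ [M]) \<longleftrightarrow>
     flip_walk n R T Ms \<and> M \<in> flips n R \<and> apply_move (apply_moves T Ms) M \<in> tilings n R"
  by (induction Ms arbitrary: T) (auto simp: apply_moves_Cons)

lemma flip_walk_tiling: "T \<in> tilings n R \<Longrightarrow> flip_walk n R T Ms \<Longrightarrow> apply_moves T Ms \<in> tilings n R"
  by (induction Ms arbitrary: T) (auto simp: apply_moves_Cons)

lemma flip_reachable_refl: "flip_reachable n R T T"
  unfolding flip_reachable_def by (intro exI[of _ "[]"]) simp

lemma flip_reachable_step:
  assumes "flip_reachable n R T S" and "M \<in> flips n R" and "apply_move S M \<in> tilings n R"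
  shows "flip_reachable n R T (apply_move S M)"
proof -
  obtain Ms where "flip_walk n R T Ms" "apply_moves T Ms = S"
    using assms(1) unfolding flip_reachable_def by blast
  with assms(2,3) show ?thesis
    unfolding flip_reachable_def by (intro exI[of _ "Ms @ [M]"]) (simp add: flip_walk_snoc apply_moves_snoc)
qed

lemma flip_reachable_tiling: "T \<in> tilings n R \<Longrightarrow> flip_reachable n R T S \<Longrightarrow> S \<in> tilings n R"
  unfolding flip_reachable_def using flip_walk_tiling by blast

subsection \<open>Flip connectivity implies the ideal inclusion\<close>

lemma flip_move_in_flip_ideal:
  assumes "finite R" and S: "S \<in> tilings n R" and M: "M \<in> flips n R"
    and S': "apply_move S M \<in> tilings n R"
  shows "ymon S - ymon (apply_move S M) \<in> (flip_ideal n R :: ('n, 'k::field) dpoly set)"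
proof -
  obtain A B where AB: "M = (A, B)"
    by fastforce
  with M have AB_flip: "(A, B) \<in> flips n R"
    by simp
  have fin: "finite S" "finite A" "finite B"
    using finite_tiling[OF \<open>finite R\<close> S] flips_subset_dominoes[OF AB_flip]
      finite_dominoes[OF \<open>finite R\<close>] finite_subset by auto
  have S'_eq: "apply_move S M = (S - A) \<union> B"
    by (simp add: AB apply_move_def)
  consider "A \<subseteq> S" | "apply_move S M = S"
    using flip_tiling_cases[OF S AB_flip] S' unfolding S'_eq by blast
  then show ?thesis
  proof cases
    case 1
    have "(S - A) \<union> A = S"
      using \<open>A \<subseteq> S\<close> by blast
    then have "ymon S = ymon (S - A) * (ymon A :: ('n, 'k) dpoly)"
      using ymon_union[of "S - A" A] fin by auto
    moreover have "ymon (apply_move S M) = ymon (S - A) * (ymon B :: ('n, 'k) dpoly)"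
      using ymon_union[of "S - A" B] fin flip_applies(2)[OF S AB_flip \<open>A \<subseteq> S\<close>]
      unfolding S'_eq by simp
    ultimately have "ymon S - ymon (apply_move S M) = ymon (S - A) * (ymon A - ymon B :: ('n, 'k) dpoly)"
      by (simp add: right_diff_distrib)
    moreover have "ymon (S - A) \<in> (poly_ring n R :: ('n, 'k) dpoly set)"
      using fin tiling_subset_dominoes[OF S] by (intro ymon_in_poly_ring) auto
    ultimately show ?thesis
      unfolding flip_ideal_def using M AB by (force intro!: mult_gen_in_gen_ideal)
  next
    case 2
    then show ?thesis
      by (simp add: flip_ideal_def zero_in_gen_ideal)
  qed
qed

lemma flip_walk_in_flip_ideal:
  "finite R \<Longrightarrow> T \<in> tilings n R \<Longrightarrow> flip_walk n R T Ms \<Longrightarrow>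
     ymon T - ymon (apply_moves T Ms) \<in> (flip_ideal n R :: ('n, 'k::field) dpoly set)"
proof (induction Ms arbitrary: T)
  case Nil
  then show ?case
    by (simp add: flip_ideal_def zero_in_gen_ideal)
next
  case (Cons M Ms)
  let ?T' = "apply_move T M"
  have "ymon T - ymon ?T' \<in> (flip_ideal n R :: ('n, 'k) dpoly set)"
    using Cons.prems by (intro flip_move_in_flip_ideal) auto
  moreover have "ymon ?T' - ymon (apply_moves ?T' Ms) \<in> (flip_ideal n R :: ('n, 'k) dpoly set)"
    using Cons by simp
  ultimately have "(ymon T - ymon ?T') + (ymon ?T' - ymon (apply_moves ?T' Ms))
      \<in> (flip_ideal n R :: ('n, 'k) dpoly set)"
    unfolding flip_ideal_def by (rule poly_ring.add_in_gen_ideal)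
  then show ?case
    by (simp add: apply_moves_Cons)
qed

lemma tiling_ideal_subset_flip_ideal:
  assumes "finite R" and "flip_connected n R"
  shows "(tiling_ideal n R :: ('n, 'k::field) dpoly set) \<subseteq> flip_ideal n R"
  unfolding tiling_ideal_def flip_ideal_def
proof (rule poly_ring.gen_ideal_subset, safe)
  fix T1 T2 assume "T1 \<in> tilings n R" "T2 \<in> tilings n R"
  then obtain Ms where "flip_walk n R T1 Ms" "apply_moves T1 Ms = T2"
    using assms(2) unfolding flip_connected_iff_reachable flip_reachable_def by blast
  then show "(ymon T1 - ymon T2 :: ('n, 'k) dpoly)
      \<in> gen_ideal (poly_ring n R) {ymon (fst M) - ymon (snd M) |M. M \<in> flips n R}"
    using flip_walk_in_flip_ideal[OF assms(1) \<open>T1 \<in> tilings n R\<close>] unfolding flip_ideal_def by blast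
qed

subsection \<open>The ideal inclusion implies flip connectivity\<close>

lemma reachable_exponents_flip_closed:
  assumes "finite R" and T: "T \<in> tilings n R" and AB: "(A, B) \<in> flips n R"
    and "u + char_pm A \<in> char_pm ` Collect (flip_reachable n R T)"
  shows "u + char_pm B \<in> char_pm ` Collect (flip_reachable n R T)"
proof -
  obtain S where reach: "flip_reachable n R T S" and S_eq: "char_pm S = u + char_pm A"
    using assms(4) by auto
  have S: "S \<in> tilings n R"
    using flip_reachable_tiling[OF T reach] .
  have fin: "finite S" "finite A" "finite B"
    using finite_tiling[OF \<open>finite R\<close> S] flips_subset_dominoes[OF AB]
      finite_dominoes[OF \<open>finite R\<close>] finite_subset by auto
  have "A \<subseteq> S" and u: "u = char_pm (S - A)"
    using S_eq char_pm_eq_add_iff[OF fin(1,2)] by auto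
  have flipped: "apply_move S (A, B) = (S - A) \<union> B"
    by (simp add: apply_move_def)
  have "flip_reachable n R T ((S - A) \<union> B)"
    using flip_reachable_step[OF reach AB] flip_applies(1)[OF S AB \<open>A \<subseteq> S\<close>] unfolding flipped
    by simp
  moreover have "char_pm ((S - A) \<union> B) = u + char_pm B"
    using char_pm_union[of "S - A" B] fin flip_applies(2)[OF S AB \<open>A \<subseteq> S\<close>] u by simp
  ultimately show ?thesis
    by (metis image_eqI mem_Collect_eq)
qed

lemma flip_reachable_if_tiling_ideal_subset:
  assumes "finite R"
    and ideals: "(tiling_ideal n R :: ('n, 'k::field) dpoly set) \<subseteq> flip_ideal n R"
    and T1: "T1 \<in> tilings n R" and T2: "T2 \<in> tilings n R"
  shows "flip_reachable n R T1 T2"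
proof -
  define C where "C = char_pm ` Collect (flip_reachable n R T1)"
  have flip_binomials_vanish: "coeff_sum C (r * g) = 0"
    if generator: "g \<in> {ymon (fst M) - ymon (snd M) | M. M \<in> flips n R}" for g r :: "('n, 'k) dpoly"
  proof -
    obtain M where "M \<in> flips n R" "g = ymon (fst M) - ymon (snd M)"
      using generator by blast
    then obtain A B where g: "g = ymon A - ymon B" and AB: "(A, B) \<in> flips n R"
      by (cases M) auto
    have "u + char_pm A \<in> C \<longleftrightarrow> u + char_pm B \<in> C" for u
      using reachable_exponents_flip_closed[OF \<open>finite R\<close> T1] AB flips_swap[OF AB]
      unfolding C_def by blast
    then show ?thesis
      unfolding g ymon_eq_single by (rule coeff_sum_mult_binomial)
  qed
  have "ymon T1 - ymon T2 \<in> (tiling_ideal n R :: ('n, 'k) dpoly set)"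
    unfolding tiling_ideal_def using T1 T2
    by (intro mult_gen_in_gen_ideal[where r = 1, simplified]) (auto simp: poly_ring_def)
  with ideals have "coeff_sum C (ymon T1 - ymon T2 :: ('n, 'k) dpoly) = 0"
    unfolding flip_ideal_def by (blast intro: coeff_sum_gen_ideal flip_binomials_vanish)
  moreover have "char_pm T1 \<in> C"
    unfolding C_def using flip_reachable_refl by blast
  ultimately have "char_pm T2 \<in> C"
    by (simp add: coeff_sum_diff ymon_eq_single coeff_sum_single split: if_splits)
  then obtain S where "flip_reachable n R T1 S" and "char_pm S = char_pm T2"
    unfolding C_def by auto
  moreover have "S \<in> tilings n R"
    using flip_reachable_tiling[OF T1 \<open>flip_reachable n R T1 S\<close>] .
  ultimately show ?thesis
    using char_pm_inject finite_tiling[OF \<open>finite R\<close>] T2 by metis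
qed

theorem mainTheorem6:
  fixes R :: "('n::finite) cube set" and n :: nat
  assumes "cubiculated_region n R"
  shows "flip_connected n R \<longleftrightarrow>
           (tiling_ideal n R :: ('n, 'k::field) dpoly set) \<subseteq> flip_ideal n R"
proof
  have "finite R"
    using assms by (simp add: cubiculated_region_def)
  show "flip_connected n R \<Longrightarrow> (tiling_ideal n R :: ('n, 'k) dpoly set) \<subseteq> flip_ideal n R"
    by (rule tiling_ideal_subset_flip_ideal[OF \<open>finite R\<close>])
  show "(tiling_ideal n R :: ('n, 'k) dpoly set) \<subseteq> flip_ideal n R \<Longrightarrow> flip_connected n R"
    unfolding flip_connected_iff_reachable
    using flip_reachable_if_tiling_ideal_subset[OF \<open>finite R\<close>] by blast
qed

end
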